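(* Let $1<\gamma\le2$ and $1\le\sigma<3/2<\rho<\infty$. The operator $$(\mathcal Q_\gamma u)(x)=\int_{\mathbb R^3}\frac{\langle y\rangle^{-\gamma}u(y)}{|x-y|}\,dy$$ is bounded from $L^\sigma(\mathbb R^3)\cap L^\rho(\mathbb R^3)$ into the space of bounded continuous functions on $\mathbb R^3$ tending to $0$ as $|x|\to\infty$, with $\|\mathcal Q_\gamma u\|_{L^\infty}\le C\|u\|_{L^\sigma\cap L^\rho}$. Moreover, for $R\ge1$ there is $C$ independent of $u$ such that for $|x|\ge R$, $$\Big|(\mathcal Q_\gamma u)(x)-\frac{C(u)}{|x|}\Big|\le C\frac{\|u\|_{L^\sigma\cap L^\rho}}{\langle x\rangle^\gamma},\qquad C(u)=\int_{\mathbb R^3}\langle y\rangle^{-\gamma}u(y)\,dy.$$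
   Context: $\langle y\rangle=(1+|y|^2)^{1/2}$; $\|u\|_{L^\sigma\cap L^\rho}=\|u\|_{L^\sigma}+\|u\|_{L^\rho}$. *)

theory Defs
  imports "HOL-Analysis.Analysis"
begin

definition jbr :: "real^3 \<Rightarrow> real" where
  "jbr y = sqrt (1 + (norm y)\<^sup>2)"

definition in_Lp :: "real \<Rightarrow> (real^3 \<Rightarrow> real) \<Rightarrow> bool" where
  "in_Lp p u \<longleftrightarrow> u \<in> borel_measurable lborel \<and> integrable lborel (\<lambda>x. \<bar>u x\<bar> powr p)"

definition Lp_norm :: "real \<Rightarrow> (real^3 \<Rightarrow> real) \<Rightarrow> real" where
  "Lp_norm p u = (\<integral>x. \<bar>u x\<bar> powr p \<partial>lborel) powr (1 / p)"

definition Qop :: "real \<Rightarrow> (real^3 \<Rightarrow> real) \<Rightarrow> real^3 \<Rightarrow> real" where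
  "Qop \<gamma> u x = (\<integral>y. jbr y powr (-\<gamma>) * u y / norm (x - y) \<partial>lborel)"

definition Cu :: "real \<Rightarrow> (real^3 \<Rightarrow> real) \<Rightarrow> real" where
  "Cu \<gamma> u = (\<integral>y. jbr y powr (-\<gamma>) * u y \<partial>lborel)"

end

theory Submission
  imports Defs
begin

text \<open>Let \<open>q0 < 3 < q_inf\<close> be the dual exponents of \<open>\<rho>\<close> and of some \<open>p \<in> [\<sigma>, 3/2)\<close>.
  Young's inequality gives pointwise
  \<open>|u y| / |x - y| \<le> |u y| powr \<sigma> + |u y| powr \<rho> + min (|x - y| powr -q_inf) (|x - y| powr -q0)\<close>,
  and the last term is integrable over \<open>\<real>\<^sup>3\<close>, being dominated by a product of integrable
  functions of the single coordinates; this gives the uniform bound. Cutting the kernel off at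
  distance \<open>\<delta>\<close> changes \<open>Q\<^sub>\<gamma> u\<close> uniformly by at most
  \<open>s powr \<rho> + s powr -q0 * (\<integral>\<^sub>|\<^sub>z\<^sub>|\<^sub><\<^sub>\<delta> |z| powr -q0)\<close> for every \<open>s > 0\<close>, by the
  same Young argument, so \<open>Q\<^sub>\<gamma> u\<close> is a uniform limit of continuous functions. For the
  asymptotics, \<open>\<langle>y\<rangle> powr -\<gamma> * |1/|x - y| - 1/|x|| \<le> 4 |x| powr -\<gamma> * (1/|y| + 1/|x - y|)\<close>
  when \<open>|x| \<ge> 1\<close> and \<open>1 < \<gamma> \<le> 2\<close> (distinguish \<open>|y| \<le> |x|/2\<close> from \<open>|y| > |x|/2\<close>), and
  both terms on the right are controlled by the uniform bound.\<close>

lemma powr_le_powr_add_powr: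
  fixes a p \<sigma> \<rho> :: real
  assumes "0 \<le> a" "\<sigma> \<le> p" "p \<le> \<rho>"
  shows "a powr p \<le> a powr \<sigma> + a powr \<rho>"
proof (cases "a \<le> 1")
  case True
  then have "a powr p \<le> a powr \<sigma>" using assms by (intro powr_mono') auto
  then show ?thesis by (simp add: add_increasing2)
next
  case False
  then have "a powr p \<le> a powr \<rho>" using assms by (intro powr_mono) auto
  then show ?thesis by (simp add: add_increasing)
qed

lemma Youngs_inequality_scaled:
  fixes a b p q s :: real
  assumes "1 < p" "1 < q" "1/p + 1/q = 1" "0 \<le> a" "0 \<le> b" "0 < s"
  shows "a * b \<le> s powr p * a powr p + b powr q / s powr q"
proof -
  have "a * b = (s * a) * (b / s)" using assms by simp
  also have "\<dots> \<le> (s * a) powr p / p + (b / s) powr q / q"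
    using assms by (intro Youngs_inequality) auto
  also have "\<dots> \<le> (s * a) powr p + (b / s) powr q"
    using assms by (intro add_mono) (auto simp: divide_le_eq mult_le_cancel_left1)
  also have "\<dots> = s powr p * a powr p + b powr q / s powr q"
    using assms by (simp add: powr_mult powr_divide)
  finally show ?thesis .
qed

lemma le_mult_of_forall_gt:
  fixes a c N :: real
  assumes "0 \<le> c" and bound: "\<And>l. N < l \<Longrightarrow> a \<le> l * c"
  shows "a \<le> N * c"
proof (cases "c = 0")
  case True
  then show ?thesis using bound[of "N + 1"] by simp
next
  case False
  with \<open>0 \<le> c\<close> have c: "0 < c" by simp
  have "a / c \<le> N"
  proof (rule dense_ge)
    fix l assume "N < l"
    then have "a \<le> l * c" by (rule bound)
    then show "a / c \<le> l" using c by (simp add: divide_le_eq)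
  qed
  then show ?thesis using c by (simp add: divide_le_eq)
qed

lemma weighted_inverse_diff_near:
  fixes g r s d w :: real
  assumes "g \<le> 2" "0 < s" "s \<le> r / 2" "\<bar>r - d\<bar> \<le> s" "0 \<le> w" "w \<le> s powr -g"
  shows "w * \<bar>1/d - 1/r\<bar> \<le> 2 * r powr -g / s"
proof -
  have r: "0 < r" and d: "r / 2 \<le> d" using assms by linarith+
  have "\<bar>1/d - 1/r\<bar> = \<bar>r - d\<bar> / (d * r)"
    using r d by (simp add: field_simps abs_div)
  also have "\<dots> \<le> s / (r / 2 * r)"
    using assms r d by (intro frac_le mult_right_mono) auto
  also have "\<dots> = 2 * s / r\<^sup>2" using r by (simp add: power2_eq_square)
  finally have diff: "\<bar>1/d - 1/r\<bar> \<le> 2 * s / r\<^sup>2" .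
  have "w * s\<^sup>2 \<le> s powr -g * s powr 2"
    using assms by (simp add: mult_right_mono)
  also have "\<dots> = s powr (2 - g)" by (simp add: powr_add[symmetric])
  also have "\<dots> \<le> r powr (2 - g)" using assms by (intro powr_mono2) auto
  also have "\<dots> = r\<^sup>2 * r powr -g" using r by (simp add: powr_diff powr_minus field_simps)
  finally have weight: "w * s\<^sup>2 \<le> r\<^sup>2 * r powr -g" .
  have "w * \<bar>1/d - 1/r\<bar> \<le> w * (2 * s / r\<^sup>2)"
    using diff assms by (intro mult_left_mono) auto
  also have "\<dots> = 2 * (w * s\<^sup>2) / (r\<^sup>2 * s)"
    using assms by (simp add: power2_eq_square)
  also have "\<dots> \<le> 2 * (r\<^sup>2 * r powr -g) / (r\<^sup>2 * s)"
    using weight assms r by (intro divide_right_mono mult_left_mono) auto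
  also have "\<dots> = 2 * r powr -g / s" using r by simp
  finally show ?thesis .
qed

lemma weighted_inverse_diff_far:
  fixes g r s d w :: real
  assumes g: "1 < g" "g \<le> 2" and r: "0 < r" and s: "r / 2 < s" and d: "0 \<le> d"
    and w: "0 \<le> w" "w \<le> s powr -g"
  shows "w * \<bar>1/d - 1/r\<bar> \<le> 4 * r powr -g / d + 2 * r powr -g / s"
proof -
  have s_pos: "0 < s" using r s by linarith
  have "s powr -g \<le> (r / 2) powr -g" using g r s by (intro powr_mono2') auto
  with w(2) have "w \<le> (r / 2) powr -g" by linarith
  also have "\<dots> = 2 powr g * r powr -g" using r by (simp add: powr_divide powr_minus_divide)
  also have "\<dots> \<le> 4 * r powr -g" using powr_mono[of g 2 2] g by (intro mult_right_mono) auto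
  finally have w_le: "w \<le> 4 * r powr -g" .
  have "w * s \<le> s powr -g * s" using w s_pos by (simp add: mult_right_mono)
  also have "\<dots> = s powr (1 - g)" using s_pos
    by (simp add: powr_diff powr_minus divide_inverse mult.commute)
  also have "\<dots> \<le> (r / 2) powr (1 - g)" using g r s by (intro powr_mono2') auto
  also have "\<dots> = 2 powr (g - 1) * (r * r powr -g)"
    using r by (simp add: powr_divide powr_diff powr_minus_divide)
  also have "\<dots> \<le> 2 * (r * r powr -g)" using powr_mono[of "g - 1" 1 2] g r
    by (intro mult_right_mono) auto
  finally have "w * s \<le> 2 * (r * r powr -g)" .
  then have w_div: "w / r \<le> 2 * r powr -g / s" using r s_pos by (simp add: field_simps)
  have "\<bar>1/d - 1/r\<bar> \<le> 1/d + 1/r" using r d by (simp add: abs_le_iff)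
  then have "w * \<bar>1/d - 1/r\<bar> \<le> w * (1/d + 1/r)"
    using w(1) by (rule mult_left_mono)
  also have "\<dots> = w / d + w / r" by (simp add: distrib_left)
  also have "\<dots> \<le> 4 * r powr -g / d + 2 * r powr -g / s"
    using w_le w_div d by (intro add_mono divide_right_mono) auto
  finally show ?thesis .
qed

lemma weighted_inverse_diff_le:
  fixes g r s d w :: real
  assumes "1 < g" "g \<le> 2" "0 < r" "0 \<le> s" "0 \<le> d"
    and "\<bar>r - d\<bar> \<le> s" "0 \<le> w" "0 < s \<Longrightarrow> w \<le> s powr -g"
  shows "w * \<bar>1/d - 1/r\<bar> \<le> 4 * r powr -g * (1/s + 1/d)"
proof -
  have "w * \<bar>1/d - 1/r\<bar> \<le> 4 * r powr -g / d + 2 * r powr -g / s"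
  proof -
    consider "s = 0" | "0 < s" "s \<le> r / 2" | "r / 2 < s" using assms by linarith
    then show ?thesis
    proof cases
      case 1
      then show ?thesis using assms by simp
    next
      case 2
      then have "w * \<bar>1/d - 1/r\<bar> \<le> 2 * r powr -g / s"
        using assms by (intro weighted_inverse_diff_near) auto
      then show ?thesis using assms by (simp add: add_increasing)
    next
      case 3
      then show ?thesis using assms by (intro weighted_inverse_diff_far) auto
    qed
  qed
  also have "\<dots> \<le> 4 * r powr -g * (1/s + 1/d)"
    using assms by (simp add: distrib_left divide_right_mono)
  finally show ?thesis .
qed

definition powr_profile :: "real \<Rightarrow> real \<Rightarrow> real \<Rightarrow> real" where
  "powr_profile \<alpha> \<beta> t = indicator {0..1} t * t powr -\<beta> + indicator {1..} t * t powr -\<alpha>"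

lemma powr_profile_measurable[measurable]: "powr_profile \<alpha> \<beta> \<in> borel_measurable borel"
  unfolding powr_profile_def by measurable

lemma powr_profile_nonneg: "0 \<le> powr_profile \<alpha> \<beta> t"
  unfolding powr_profile_def by (auto simp: indicator_def)

lemma powr_profile_pos: "0 < t \<Longrightarrow> 0 < powr_profile \<alpha> \<beta> t"
  unfolding powr_profile_def by (cases "t \<le> 1") (auto simp: indicator_def add_pos_nonneg)

lemma nn_integral_powr_profile_finite:
  assumes "0 \<le> \<beta>" "\<beta> < 1" "1 < \<alpha>"
  shows "(\<integral>\<^sup>+t. ennreal (powr_profile \<alpha> \<beta> t) \<partial>lborel) < \<infinity>"
proof -
  have "((\<lambda>t. t powr -\<beta>) has_integral (1 / (1 - \<beta>))) {0..1}"
    using has_integral_powr_from_0[of "-\<beta>" 1] assms by simp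
  then have near: "(\<integral>\<^sup>+t. ennreal (indicator {0..1} t * t powr -\<beta>) \<partial>lborel) = ennreal (1 / (1 - \<beta>))"
    by (rule nn_integral_has_integral_lebesgue[rotated]) auto
  have "((\<lambda>t. t powr -\<alpha>) has_integral (1 / (\<alpha> - 1))) {1..}"
    using has_integral_powr_to_inf[of "-\<alpha>" 1] assms by (simp add: minus_divide_right)
  then have far: "(\<integral>\<^sup>+t. ennreal (indicator {1..} t * t powr -\<alpha>) \<partial>lborel) = ennreal (1 / (\<alpha> - 1))"
    by (rule nn_integral_has_integral_lebesgue[rotated]) auto
  have "(\<integral>\<^sup>+t. ennreal (powr_profile \<alpha> \<beta> t) \<partial>lborel)
      = (\<integral>\<^sup>+t. ennreal (indicator {0..1} t * t powr -\<beta>) + ennreal (indicator {1..} t * t powr -\<alpha>) \<partial>lborel)"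
    unfolding powr_profile_def by (intro nn_integral_cong ennreal_plus) (auto simp: indicator_def)
  also have "\<dots> = ennreal (1 / (1 - \<beta>)) + ennreal (1 / (\<alpha> - 1))"
    by (subst nn_integral_add) (auto simp: near far)
  finally show ?thesis by simp
qed

lemma min_powr_le_powr_profile:
  fixes r t \<alpha> \<beta> :: real
  assumes "0 < t" "t \<le> r" "0 \<le> \<beta>" "\<beta> \<le> \<alpha>"
  shows "(if r \<le> 1 then r powr -\<beta> else r powr -\<alpha>) \<le> powr_profile \<alpha> \<beta> t"
proof (cases "t \<le> 1")
  case True
  have "(if r \<le> 1 then r powr -\<beta> else r powr -\<alpha>) \<le> t powr -\<beta>"
  proof (cases "r \<le> 1")
    case False
    have "r powr -\<alpha> \<le> 1" using powr_mono2'[of "-\<alpha>" 1 r] False assms by simp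
    also have "1 \<le> t powr -\<beta>" using powr_mono2'[of "-\<beta>" t 1] True assms by simp
    finally show ?thesis using False by simp
  qed (use assms in \<open>auto intro: powr_mono2'\<close>)
  then show ?thesis using True assms unfolding powr_profile_def by (auto simp: indicator_def)
next
  case False
  then have "r powr -\<alpha> \<le> t powr -\<alpha>" using assms by (intro powr_mono2') auto
  then show ?thesis using False assms unfolding powr_profile_def by (auto simp: indicator_def)
qed

lemma min_norm_powr_le_prod_powr_profile:
  fixes z :: "'a::euclidean_space" and a b :: real
  assumes "0 \<le> b" "b \<le> a" and coords: "\<forall>e\<in>Basis. z \<bullet> e \<noteq> 0"
  shows "min (norm z powr -a) (norm z powr -b)
    \<le> (\<Prod>e\<in>Basis. powr_profile (a / DIM('a)) (b / DIM('a)) \<bar>z \<bullet> e\<bar>)"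
proof -
  define n where "n = DIM('a)"
  define E where "E = (if norm z \<le> 1 then norm z powr -(b / n) else norm z powr -(a / n))"
  have "z \<noteq> 0" using coords nonempty_Basis by fastforce
  then have "E ^ n = (if norm z \<le> 1 then norm z powr -b else norm z powr -a)"
    unfolding E_def n_def by (simp add: powr_power)
  then have "min (norm z powr -a) (norm z powr -b) \<le> E ^ n" by simp
  also have "\<dots> = (\<Prod>e\<in>(Basis :: 'a set). E)" unfolding n_def by simp
  also have "\<dots> \<le> (\<Prod>e\<in>Basis. powr_profile (a / n) (b / n) \<bar>z \<bullet> e\<bar>)"
  proof (intro prod_mono conjI)
    fix e :: 'a assume e: "e \<in> Basis"
    show "0 \<le> E" unfolding E_def by simp
    show "E \<le> powr_profile (a / n) (b / n) \<bar>z \<bullet> e\<bar>"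
      unfolding E_def using coords e Basis_le_norm[OF e, of z] assms
      by (intro min_powr_le_powr_profile) (auto simp: n_def divide_right_mono)
  qed
  finally show ?thesis unfolding n_def .
qed

text \<open>The value \<open>\<infinity>\<close> at \<open>0\<close> makes the product majorant below valid also on the coordinate
  hyperplanes.\<close>

definition coordinate_majorant :: "real \<Rightarrow> real \<Rightarrow> real \<Rightarrow> ennreal" where
  "coordinate_majorant \<alpha> \<beta> t = (if t = 0 then \<infinity> else ennreal (powr_profile \<alpha> \<beta> \<bar>t\<bar>))"

lemma coordinate_majorant_measurable[measurable]: "coordinate_majorant \<alpha> \<beta> \<in> borel_measurable borel"
  unfolding coordinate_majorant_def by measurable

lemma nn_integral_coordinate_majorant_finite:
  assumes "0 \<le> \<beta>" "\<beta> < 1" "1 < \<alpha>"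
  shows "(\<integral>\<^sup>+t. coordinate_majorant \<alpha> \<beta> t \<partial>lborel) < \<infinity>"
proof -
  have "(\<integral>\<^sup>+t. coordinate_majorant \<alpha> \<beta> t \<partial>lborel)
      \<le> (\<integral>\<^sup>+t. ennreal (powr_profile \<alpha> \<beta> t) + ennreal (powr_profile \<alpha> \<beta> (-t)) \<partial>lborel)"
    using AE_lborel_singleton[of 0]
    by (intro nn_integral_mono_AE, eventually_elim)
       (auto simp: coordinate_majorant_def abs_real_def powr_profile_nonneg add_increasing add_increasing2)
  also have "\<dots> = 2 * (\<integral>\<^sup>+t. ennreal (powr_profile \<alpha> \<beta> t) \<partial>lborel)"
    using nn_integral_real_affine[of "\<lambda>t. ennreal (powr_profile \<alpha> \<beta> t)" "-1" 0]
    by (simp add: nn_integral_add mult_2)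
  finally show ?thesis
    using nn_integral_powr_profile_finite[OF assms] by (simp add: ennreal_mult_less_top order_le_less_trans)
qed

lemma min_norm_powr_le_prod_coordinate_majorant:
  fixes z :: "'a::euclidean_space" and a b :: real
  assumes "0 \<le> b" "b \<le> a"
  shows "ennreal (min (norm z powr -a) (norm z powr -b))
    \<le> (\<Prod>e\<in>Basis. coordinate_majorant (a / DIM('a)) (b / DIM('a)) (z \<bullet> e))"
proof (cases "\<forall>e\<in>Basis. z \<bullet> e \<noteq> 0")
  case True
  then have "ennreal (min (norm z powr -a) (norm z powr -b))
      \<le> ennreal (\<Prod>e\<in>Basis. powr_profile (a / DIM('a)) (b / DIM('a)) \<bar>z \<bullet> e\<bar>)"
    using assms by (intro ennreal_leI min_norm_powr_le_prod_powr_profile) auto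
  also have "\<dots> = (\<Prod>e\<in>Basis. coordinate_majorant (a / DIM('a)) (b / DIM('a)) (z \<bullet> e))"
    using True by (simp add: coordinate_majorant_def prod_ennreal powr_profile_nonneg)
  finally show ?thesis .
next
  case False
  have "coordinate_majorant \<alpha> \<beta> t \<noteq> 0" for \<alpha> \<beta> t
    using powr_profile_pos[of "\<bar>t\<bar>" \<alpha> \<beta>] by (auto simp: coordinate_majorant_def)
  with False have "(\<Prod>e\<in>Basis. coordinate_majorant (a / DIM('a)) (b / DIM('a)) (z \<bullet> e)) = \<infinity>"
    by (auto simp: ennreal_prod_eq_top coordinate_majorant_def)
  then show ?thesis by simp
qed

lemma integrable_min_norm_powr:
  fixes a b :: real
  assumes "0 \<le> b" "b < DIM('a)" "DIM('a) < a"
  shows "integrable (lborel :: 'a::euclidean_space measure) (\<lambda>z. min (norm z powr -a) (norm z powr -b))"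
proof (rule integrableI_nonneg)
  let ?\<psi> = "coordinate_majorant (a / DIM('a)) (b / DIM('a))"
  have "(\<integral>\<^sup>+z. ennreal (min (norm z powr -a) (norm z powr -b)) \<partial>(lborel :: 'a measure))
      \<le> (\<integral>\<^sup>+z. (\<Prod>e\<in>Basis. ?\<psi> (z \<bullet> e)) \<partial>(lborel :: 'a measure))"
    using assms by (intro nn_integral_mono min_norm_powr_le_prod_coordinate_majorant) auto
  also have "\<dots> = (\<Prod>e\<in>(Basis :: 'a set). \<integral>\<^sup>+t. ?\<psi> t \<partial>lborel)"
    by (rule nn_integral_lborel_prod) auto
  also have "\<dots> < \<infinity>"
    using assms nn_integral_coordinate_majorant_finite[of "b / DIM('a)" "a / DIM('a)"]
    by (simp add: power_less_top_ennreal)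
  finally show "(\<integral>\<^sup>+z. ennreal (min (norm z powr -a) (norm z powr -b)) \<partial>(lborel :: 'a measure)) < \<infinity>" .
qed auto

lemma lborel_distr_reflect: "distr lborel borel (\<lambda>y. x - y) = (lborel :: 'a::euclidean_space measure)"
  using lborel_affine[of "-1" x] by (simp add: density_1)

lemma
  fixes f :: "'a::euclidean_space \<Rightarrow> real"
  assumes "integrable lborel f"
  shows integrable_reflect_lborel: "integrable lborel (\<lambda>y. f (x - y))"
    and integral_reflect_lborel: "(\<integral>y. f (x - y) \<partial>lborel) = integral\<^sup>L lborel f"
proof -
  have [measurable]: "f \<in> borel_measurable borel"
    using borel_measurable_integrable[OF assms] by simp
  show "integrable lborel (\<lambda>y. f (x - y))"
    using assms by (subst (asm) lborel_distr_reflect[symmetric, of x]) (simp add: integrable_distr_eq)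
  show "(\<integral>y. f (x - y) \<partial>lborel) = integral\<^sup>L lborel f"
    using integral_distr[of "\<lambda>y. x - y" lborel borel f] by (simp add: lborel_distr_reflect)
qed

lemma Lp_norm_nonneg: "0 \<le> Lp_norm p u"
  unfolding Lp_norm_def by simp

lemma
  assumes "in_Lp p u" "0 < p" "0 < l" "Lp_norm p u \<le> l"
  shows integrable_Lp_normalized: "integrable lborel (\<lambda>y. (\<bar>u y\<bar> / l) powr p)"
    and integral_Lp_normalized_le_1: "(\<integral>y. (\<bar>u y\<bar> / l) powr p \<partial>lborel) \<le> 1"
proof -
  have eq: "(\<lambda>y. (\<bar>u y\<bar> / l) powr p) = (\<lambda>y. \<bar>u y\<bar> powr p / l powr p)"
    using assms by (simp add: powr_divide)
  show "integrable lborel (\<lambda>y. (\<bar>u y\<bar> / l) powr p)"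
    using assms unfolding eq in_Lp_def by simp
  have "(\<integral>y. \<bar>u y\<bar> powr p \<partial>lborel) = Lp_norm p u powr p"
    unfolding Lp_norm_def using assms by (simp add: powr_powr)
  then have "(\<integral>y. (\<bar>u y\<bar> / l) powr p \<partial>lborel) = Lp_norm p u powr p / l powr p"
    unfolding eq by simp
  also have "\<dots> \<le> 1"
    using assms Lp_norm_nonneg[of p u] by (simp add: powr_mono2 divide_le_eq)
  finally show "(\<integral>y. (\<bar>u y\<bar> / l) powr p \<partial>lborel) \<le> 1" .
qed

lemma le_mult_Lp_norm_sum:
  fixes a c :: real
  assumes "0 \<le> c" and bound: "\<And>l. 0 < l \<Longrightarrow> Lp_norm p u \<le> l \<Longrightarrow> Lp_norm q u \<le> l \<Longrightarrow> a \<le> l * c"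
  shows "a \<le> c * (Lp_norm p u + Lp_norm q u)"
proof -
  have "a \<le> (Lp_norm p u + Lp_norm q u) * c"
  proof (rule le_mult_of_forall_gt[OF \<open>0 \<le> c\<close>])
    fix l assume "Lp_norm p u + Lp_norm q u < l"
    then show "a \<le> l * c"
      using Lp_norm_nonneg[of p u] Lp_norm_nonneg[of q u] by (intro bound) auto
  qed
  then show ?thesis by (simp add: mult.commute)
qed

lemma jbr_ge_1: "1 \<le> jbr y"
  unfolding jbr_def by simp

lemma norm_le_jbr: "norm y \<le> jbr y"
  unfolding jbr_def by (rule real_le_rsqrt) simp

lemma jbr_measurable[measurable]: "jbr \<in> borel_measurable borel"
  unfolding jbr_def by measurable

lemma jbr_powr_pos:
  fixes \<gamma> :: real and y :: "real^3"
  shows "0 < jbr y powr -\<gamma>"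
  using jbr_ge_1[of y] by simp

lemma jbr_powr_le_1:
  fixes \<gamma> :: real and y :: "real^3"
  shows "0 \<le> \<gamma> \<Longrightarrow> jbr y powr -\<gamma> \<le> 1"
  using jbr_ge_1[of y] powr_mono2'[of "-\<gamma>" 1 "jbr y"] by simp

lemma jbr_powr_le_norm_powr:
  fixes \<gamma> :: real and y :: "real^3"
  shows "0 \<le> \<gamma> \<Longrightarrow> y \<noteq> 0 \<Longrightarrow> jbr y powr -\<gamma> \<le> norm y powr -\<gamma>"
  using norm_le_jbr[of y] by (intro powr_mono2') auto

lemma jbr_powr_le_inverse_norm:
  fixes \<gamma> :: real and y :: "real^3"
  assumes "1 \<le> \<gamma>" "y \<noteq> 0"
  shows "jbr y powr -\<gamma> \<le> 1 / norm y"
proof -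
  have "jbr y powr -\<gamma> \<le> jbr y powr -1" using jbr_ge_1[of y] assms by (intro powr_mono) auto
  also have "\<dots> = 1 / jbr y" using jbr_ge_1[of y] by (simp add: powr_minus_divide)
  also have "\<dots> \<le> 1 / norm y" using norm_le_jbr[of y] jbr_ge_1[of y] assms by (intro divide_left_mono) auto
  finally show ?thesis .
qed

lemma jbr_powr_mult_inverse_diff_le:
  fixes x y :: "real^3"
  assumes "1 < \<gamma>" "\<gamma> \<le> 2" "1 \<le> norm x"
  shows "jbr y powr -\<gamma> * \<bar>1 / norm (x - y) - 1 / norm x\<bar>
    \<le> 4 * norm x powr -\<gamma> * (1 / norm y + 1 / norm (x - y))"
proof (rule weighted_inverse_diff_le)
  show "0 < norm x" using assms by linarith
  show "\<bar>norm x - norm (x - y)\<bar> \<le> norm y" using norm_triangle_ineq3[of x "x - y"] by simp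
  show "0 < norm y \<Longrightarrow> jbr y powr -\<gamma> \<le> norm y powr -\<gamma>"
    using jbr_powr_le_norm_powr[of \<gamma> y] assms by simp
qed (use assms in simp_all)

lemma norm_powr_le_jbr_powr:
  assumes "1 \<le> norm x" "0 \<le> \<gamma>" "\<gamma> \<le> 2"
  shows "norm x powr -\<gamma> \<le> 2 / jbr x powr \<gamma>"
proof -
  have "jbr x \<le> sqrt 2 * norm x"
    using assms unfolding jbr_def
    by (simp add: real_le_lsqrt power_mult_distrib one_le_power)
  then have "jbr x powr \<gamma> \<le> (sqrt 2 * norm x) powr \<gamma>"
    using jbr_ge_1[of x] assms by (intro powr_mono2) auto
  also have "\<dots> = sqrt 2 powr \<gamma> * norm x powr \<gamma>" by (rule powr_mult)
  also have "\<dots> \<le> 2 * norm x powr \<gamma>"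
    using powr_mono[of \<gamma> 2 "sqrt 2"] assms by (intro mult_right_mono) (auto simp: powr_numeral)
  finally have "jbr x powr \<gamma> \<le> 2 * norm x powr \<gamma>" .
  moreover have "0 < norm x powr \<gamma>" "0 < jbr x powr \<gamma>" using assms jbr_ge_1[of x] by auto
  ultimately have "2 / (2 * norm x powr \<gamma>) \<le> 2 / jbr x powr \<gamma>"
    by (intro divide_left_mono) auto
  then show ?thesis by (simp add: powr_minus_divide)
qed

locale potential_exponents =
  fixes \<sigma> \<rho> \<gamma> :: real
  assumes gamma_gt_1: "1 < \<gamma>" and gamma_le_2: "\<gamma> \<le> 2"
    and sigma_ge_1: "1 \<le> \<sigma>" and sigma_lt: "\<sigma> < 3/2" and rho_gt: "3/2 < \<rho>"
begin

text \<open>\<open>1/|z|\<close> is \<open>q0\<close>-integrable near \<open>0\<close> and \<open>q_inf\<close>-integrable near \<open>\<infinity>\<close>.\<close>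

definition p :: real where "p = (\<sigma> + 3/2) / 2"

definition q0 :: real where "q0 = \<rho> / (\<rho> - 1)"

definition q_inf :: real where "q_inf = p / (p - 1)"

lemma exponent_bounds:
  "1 < p" "\<sigma> \<le> p" "p \<le> \<rho>" "1 < q0" "q0 < 3" "3 < q_inf"
  "1 / \<rho> + 1 / q0 = 1" "1 / p + 1 / q_inf = 1"
proof -
  show p: "1 < p" "\<sigma> \<le> p" "p \<le> \<rho>" using sigma_ge_1 sigma_lt rho_gt unfolding p_def by auto
  have "p < 3/2" using sigma_lt unfolding p_def by simp
  with p show "3 < q_inf" "1 / p + 1 / q_inf = 1" unfolding q_inf_def by (auto simp: field_simps)
  show "1 < q0" "q0 < 3" "1 / \<rho> + 1 / q0 = 1" using rho_gt unfolding q0_def by (auto simp: field_simps)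
qed

definition kernel_majorant :: "real^3 \<Rightarrow> real" where
  "kernel_majorant z = min (norm z powr -q_inf) (norm z powr -q0)"

definition K :: real where "K = integral\<^sup>L lborel kernel_majorant"

lemma kernel_majorant_nonneg: "0 \<le> kernel_majorant z"
  unfolding kernel_majorant_def by simp

lemma integrable_kernel_majorant: "integrable lborel kernel_majorant"
  unfolding kernel_majorant_def using exponent_bounds by (intro integrable_min_norm_powr) auto

lemma K_nonneg: "0 \<le> K"
  unfolding K_def using kernel_majorant_nonneg by simp

lemma div_norm_le_kernel_majorant:
  assumes "0 \<le> a"
  shows "a / norm z \<le> a powr \<sigma> + a powr \<rho> + kernel_majorant z"
proof -
  have inv: "inverse (norm z) powr q = norm z powr -q" for q
    by (simp add: inverse_powr powr_minus)
  show ?thesis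
  proof (cases "norm z \<le> 1")
    case True
    have "a * inverse (norm z) \<le> 1 powr \<rho> * a powr \<rho> + inverse (norm z) powr q0 / 1 powr q0"
      by (rule Youngs_inequality_scaled) (use assms exponent_bounds rho_gt in auto)
    then have "a / norm z \<le> a powr \<rho> + inverse (norm z) powr q0"
      by (simp add: divide_inverse)
    also have "inverse (norm z) powr q0 = kernel_majorant z"
    proof (cases "z = 0")
      case False
      then have "norm z powr -q_inf \<ge> norm z powr -q0"
        using True exponent_bounds by (intro powr_mono') auto
      then show ?thesis unfolding kernel_majorant_def inv by simp
    qed (simp add: kernel_majorant_def)
    finally have "a / norm z \<le> a powr \<rho> + kernel_majorant z" .
    then show ?thesis using powr_ge_zero[of a \<sigma>] by linarith
  next
    case False
    have "a * inverse (norm z) \<le> 1 powr p * a powr p + inverse (norm z) powr q_inf / 1 powr q_inf"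
      by (rule Youngs_inequality_scaled) (use assms exponent_bounds in auto)
    then have "a / norm z \<le> a powr p + inverse (norm z) powr q_inf"
      by (simp add: divide_inverse)
    also have "a powr p \<le> a powr \<sigma> + a powr \<rho>"
      using assms exponent_bounds by (intro powr_le_powr_add_powr) auto
    also have "inverse (norm z) powr q_inf = kernel_majorant z"
    proof -
      have "norm z powr -q_inf \<le> norm z powr -q0"
        using False exponent_bounds by (intro powr_mono) auto
      then show ?thesis unfolding kernel_majorant_def inv by simp
    qed
    finally show ?thesis by simp
  qed
qed

lemma
  assumes u: "in_Lp \<sigma> u" "in_Lp \<rho> u" and l: "0 < l" "Lp_norm \<sigma> u \<le> l" "Lp_norm \<rho> u \<le> l"
  shows integrable_abs_potential: "integrable lborel (\<lambda>y. \<bar>u y\<bar> / norm (x - y))"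
    and abs_potential_le: "(\<integral>y. \<bar>u y\<bar> / norm (x - y) \<partial>lborel) \<le> l * (2 + K)"
proof -
  have [measurable]: "u \<in> borel_measurable borel" using u unfolding in_Lp_def by simp
  have \<sigma>: "0 < \<sigma>" and \<rho>: "0 < \<rho>" using sigma_ge_1 rho_gt by auto
  define F where "F y = l * ((\<bar>u y\<bar> / l) powr \<sigma> + (\<bar>u y\<bar> / l) powr \<rho> + kernel_majorant (x - y))" for y
  have int_F: "integrable lborel F"
    unfolding F_def using integrable_Lp_normalized[OF u(1) \<sigma> l(1,2)]
      integrable_Lp_normalized[OF u(2) \<rho> l(1,3)]
      integrable_reflect_lborel[OF integrable_kernel_majorant] by simp
  have le_F: "\<bar>u y\<bar> / norm (x - y) \<le> F y" for y
  proof -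
    have "\<bar>u y\<bar> / norm (x - y) = l * ((\<bar>u y\<bar> / l) / norm (x - y))" using l by simp
    also have "\<dots> \<le> F y" unfolding F_def
      using div_norm_le_kernel_majorant[of "\<bar>u y\<bar> / l" "x - y"] l by (intro mult_left_mono) auto
    finally show ?thesis .
  qed
  show int: "integrable lborel (\<lambda>y. \<bar>u y\<bar> / norm (x - y))"
    using le_F by (intro Bochner_Integration.integrable_bound[OF int_F]) (auto intro: order_trans[OF _ abs_ge_self])
  have "(\<integral>y. \<bar>u y\<bar> / norm (x - y) \<partial>lborel) \<le> integral\<^sup>L lborel F"
    using int int_F le_F by (rule integral_mono)
  also have "\<dots> = l * ((\<integral>y. (\<bar>u y\<bar> / l) powr \<sigma> \<partial>lborel) + (\<integral>y. (\<bar>u y\<bar> / l) powr \<rho> \<partial>lborel) + K)"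
    unfolding F_def K_def using integrable_Lp_normalized[OF u(1) \<sigma> l(1,2)]
      integrable_Lp_normalized[OF u(2) \<rho> l(1,3)] integrable_kernel_majorant
      integrable_reflect_lborel[OF integrable_kernel_majorant]
    by (simp add: integral_reflect_lborel)
  also have "\<dots> \<le> l * (1 + 1 + K)"
    using integral_Lp_normalized_le_1[OF u(1) \<sigma> l(1,2)]
      integral_Lp_normalized_le_1[OF u(2) \<rho> l(1,3)] l by (intro mult_left_mono add_mono) auto
  finally show "(\<integral>y. \<bar>u y\<bar> / norm (x - y) \<partial>lborel) \<le> l * (2 + K)" by simp
qed

lemma
  assumes u: "in_Lp \<sigma> u" "in_Lp \<rho> u" and l: "0 < l" "Lp_norm \<sigma> u \<le> l" "Lp_norm \<rho> u \<le> l"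
  shows integrable_Qop_integrand: "integrable lborel (\<lambda>y. jbr y powr (-\<gamma>) * u y / norm (x - y))"
    and abs_Qop_le: "\<bar>Qop \<gamma> u x\<bar> \<le> l * (2 + K)"
proof -
  have [measurable]: "u \<in> borel_measurable borel" using u unfolding in_Lp_def by simp
  have le: "\<bar>jbr y powr (-\<gamma>) * u y / norm (x - y)\<bar> \<le> \<bar>u y\<bar> / norm (x - y)" for y
    using jbr_powr_pos[of y \<gamma>] jbr_powr_le_1[of \<gamma> y] gamma_gt_1
    by (simp add: abs_mult divide_right_mono mult_left_le_one_le)
  show int: "integrable lborel (\<lambda>y. jbr y powr (-\<gamma>) * u y / norm (x - y))"
    using le by (intro Bochner_Integration.integrable_bound[OF integrable_abs_potential[OF u l]]) auto
  have "\<bar>Qop \<gamma> u x\<bar> \<le> (\<integral>y. \<bar>u y\<bar> / norm (x - y) \<partial>lborel)"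
    unfolding Qop_def using le by (intro integral_abs_bound_integral[OF int integrable_abs_potential[OF u l]]) auto
  also have "\<dots> \<le> l * (2 + K)" by (rule abs_potential_le[OF u l])
  finally show "\<bar>Qop \<gamma> u x\<bar> \<le> l * (2 + K)" .
qed

lemma abs_Qop_le_Lp_norms:
  assumes u: "in_Lp \<sigma> u" "in_Lp \<rho> u"
  shows "\<bar>Qop \<gamma> u x\<bar> \<le> (2 + K) * (Lp_norm \<sigma> u + Lp_norm \<rho> u)"
  using abs_Qop_le[OF u] K_nonneg by (intro le_mult_Lp_norm_sum) auto

lemma bounded_range_Qop:
  assumes "in_Lp \<sigma> u" "in_Lp \<rho> u"
  shows "bounded (range (Qop \<gamma> u))"
  unfolding bounded_iff using abs_Qop_le_Lp_norms[OF assms] by auto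

lemma integrable_weighted:
  assumes u: "in_Lp \<sigma> u" "in_Lp \<rho> u"
  shows "integrable lborel (\<lambda>y. jbr y powr (-\<gamma>) * u y)"
proof -
  have [measurable]: "u \<in> borel_measurable borel" using u unfolding in_Lp_def by simp
  have l: "0 < Lp_norm \<sigma> u + Lp_norm \<rho> u + 1" "Lp_norm \<sigma> u \<le> Lp_norm \<sigma> u + Lp_norm \<rho> u + 1"
    "Lp_norm \<rho> u \<le> Lp_norm \<sigma> u + Lp_norm \<rho> u + 1"
    using Lp_norm_nonneg[of \<sigma> u] Lp_norm_nonneg[of \<rho> u] by auto
  have "AE y in lborel. norm (jbr y powr (-\<gamma>) * u y) \<le> \<bar>u y\<bar> / norm (0 - y)"
    using AE_lborel_singleton[of 0]
  proof eventually_elim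
    case (elim y)
    have "jbr y powr -\<gamma> * \<bar>u y\<bar> \<le> 1 / norm y * \<bar>u y\<bar>"
      using jbr_powr_le_inverse_norm[of \<gamma> y] elim gamma_gt_1 by (intro mult_right_mono) auto
    then show ?case using jbr_powr_pos[of y \<gamma>] by (simp add: abs_mult)
  qed
  then show ?thesis
    by (intro Bochner_Integration.integrable_bound[OF integrable_abs_potential[OF u l, of 0]]) auto
qed

lemma Qop_minus_Cu_le:
  assumes u: "in_Lp \<sigma> u" "in_Lp \<rho> u" and l: "0 < l" "Lp_norm \<sigma> u \<le> l" "Lp_norm \<rho> u \<le> l"
    and x: "1 \<le> norm x"
  shows "\<bar>Qop \<gamma> u x - Cu \<gamma> u / norm x\<bar> \<le> 8 * norm x powr -\<gamma> * (l * (2 + K))"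
proof -
  define f where "f y = jbr y powr (-\<gamma>) * u y" for y
  define t where "t = norm x powr -\<gamma>"
  have int_Q: "integrable lborel (\<lambda>y. f y / norm (x - y))"
    unfolding f_def by (rule integrable_Qop_integrand[OF u l])
  have int_C: "integrable lborel (\<lambda>y. f y / norm x)"
    unfolding f_def using integrable_weighted[OF u] by simp
  note int_0 = integrable_abs_potential[OF u l, of 0] and int_x = integrable_abs_potential[OF u l, of x]
  define G where "G y = 4 * t * (\<bar>u y\<bar> / norm (0 - y) + \<bar>u y\<bar> / norm (x - y))" for y
  have le_G: "\<bar>f y / norm (x - y) - f y / norm x\<bar> \<le> G y" for y
  proof -
    have "jbr y powr -\<gamma> * \<bar>1 / norm (x - y) - 1 / norm x\<bar> \<le> 4 * t * (1 / norm y + 1 / norm (x - y))"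
      unfolding t_def using gamma_gt_1 gamma_le_2 x by (rule jbr_powr_mult_inverse_diff_le)
    then have "\<bar>u y\<bar> * (jbr y powr -\<gamma> * \<bar>1 / norm (x - y) - 1 / norm x\<bar>)
        \<le> \<bar>u y\<bar> * (4 * t * (1 / norm y + 1 / norm (x - y)))"
      by (rule mult_left_mono) simp
    moreover have "f y / norm (x - y) - f y / norm x
        = u y * (jbr y powr -\<gamma> * (1 / norm (x - y) - 1 / norm x))"
      unfolding f_def by (simp add: algebra_simps)
    then have "\<bar>f y / norm (x - y) - f y / norm x\<bar>
        = \<bar>u y\<bar> * (jbr y powr -\<gamma> * \<bar>1 / norm (x - y) - 1 / norm x\<bar>)"
      using jbr_powr_pos[of y \<gamma>] by (simp add: abs_mult)
    ultimately show ?thesis unfolding G_def by (simp add: algebra_simps)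
  qed
  have int_G: "integrable lborel G" unfolding G_def using int_0 int_x by simp
  have "Qop \<gamma> u x - Cu \<gamma> u / norm x = (\<integral>y. f y / norm (x - y) \<partial>lborel) - (\<integral>y. f y / norm x \<partial>lborel)"
    unfolding Qop_def Cu_def f_def by simp
  also have "\<dots> = (\<integral>y. f y / norm (x - y) - f y / norm x \<partial>lborel)"
    using int_Q int_C by (rule Bochner_Integration.integral_diff[symmetric])
  also have "\<bar>\<dots>\<bar> \<le> integral\<^sup>L lborel G"
    using int_Q int_C le_G by (intro integral_abs_bound_integral[OF _ int_G]) auto
  also have "\<dots> = 4 * t * ((\<integral>y. \<bar>u y\<bar> / norm (0 - y) \<partial>lborel) + (\<integral>y. \<bar>u y\<bar> / norm (x - y) \<partial>lborel))"
    unfolding G_def using int_0 int_x by (simp add: Bochner_Integration.integral_add)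
  also have "\<dots> \<le> 4 * t * (l * (2 + K) + l * (2 + K))"
    unfolding t_def using abs_potential_le[OF u l, of 0] abs_potential_le[OF u l, of x]
    by (intro mult_left_mono add_mono) auto
  finally show ?thesis unfolding t_def by simp
qed

lemma Qop_asymptotics:
  assumes u: "in_Lp \<sigma> u" "in_Lp \<rho> u" and x: "1 \<le> norm x"
  shows "\<bar>Qop \<gamma> u x - Cu \<gamma> u / norm x\<bar> \<le> 16 * (2 + K) * (Lp_norm \<sigma> u + Lp_norm \<rho> u) / jbr x powr \<gamma>"
proof -
  have "\<bar>Qop \<gamma> u x - Cu \<gamma> u / norm x\<bar> \<le> 16 * (2 + K) / jbr x powr \<gamma> * (Lp_norm \<sigma> u + Lp_norm \<rho> u)"
  proof (rule le_mult_Lp_norm_sum)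
    show "0 \<le> 16 * (2 + K) / jbr x powr \<gamma>" using K_nonneg by simp
    fix l assume l: "0 < l" "Lp_norm \<sigma> u \<le> l" "Lp_norm \<rho> u \<le> l"
    have "\<bar>Qop \<gamma> u x - Cu \<gamma> u / norm x\<bar> \<le> 8 * norm x powr -\<gamma> * (l * (2 + K))"
      by (rule Qop_minus_Cu_le[OF u l x])
    also have "\<dots> \<le> 8 * (2 / jbr x powr \<gamma>) * (l * (2 + K))"
      using norm_powr_le_jbr_powr[OF x] gamma_gt_1 gamma_le_2 l K_nonneg
      by (intro mult_right_mono mult_left_mono) auto
    also have "\<dots> = l * (16 * (2 + K) / jbr x powr \<gamma>)" by simp
    finally show "\<bar>Qop \<gamma> u x - Cu \<gamma> u / norm x\<bar> \<le> l * (16 * (2 + K) / jbr x powr \<gamma>)" .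
  qed
  then show ?thesis by simp
qed

lemma Qop_tendsto_0:
  assumes u: "in_Lp \<sigma> u" "in_Lp \<rho> u"
  shows "(Qop \<gamma> u \<longlongrightarrow> 0) at_infinity"
proof (rule Lim_null_comparison)
  define c where "c = \<bar>Cu \<gamma> u\<bar> + 16 * (2 + K) * (Lp_norm \<sigma> u + Lp_norm \<rho> u)"
  show "\<forall>\<^sub>F x in at_infinity. norm (Qop \<gamma> u x) \<le> c / norm x"
    unfolding eventually_at_infinity
  proof (intro exI allI impI)
    fix x :: "real^3" assume x: "1 \<le> norm x"
    have "norm x \<le> jbr x powr \<gamma>"
      using norm_le_jbr[of x] powr_mono[of 1 \<gamma> "jbr x"] jbr_ge_1[of x] gamma_gt_1 by simp
    then have "16 * (2 + K) * (Lp_norm \<sigma> u + Lp_norm \<rho> u) / jbr x powr \<gamma>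
        \<le> 16 * (2 + K) * (Lp_norm \<sigma> u + Lp_norm \<rho> u) / norm x"
      using x K_nonneg Lp_norm_nonneg[of \<sigma> u] Lp_norm_nonneg[of \<rho> u] jbr_ge_1[of x]
      by (intro divide_left_mono mult_pos_pos) auto
    moreover have "\<bar>Qop \<gamma> u x\<bar> \<le> \<bar>Cu \<gamma> u\<bar> / norm x + \<bar>Qop \<gamma> u x - Cu \<gamma> u / norm x\<bar>"
      using abs_triangle_ineq[of "Cu \<gamma> u / norm x" "Qop \<gamma> u x - Cu \<gamma> u / norm x"] by (simp add: abs_div)
    ultimately have "\<bar>Qop \<gamma> u x\<bar> \<le> \<bar>Cu \<gamma> u\<bar> / norm x + 16 * (2 + K) * (Lp_norm \<sigma> u + Lp_norm \<rho> u) / norm x"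
      using Qop_asymptotics[OF u x] by linarith
    then show "norm (Qop \<gamma> u x) \<le> c / norm x" unfolding c_def by (simp add: add_divide_distrib)
  qed
  have "filterlim (\<lambda>x::real^3. norm x) at_top at_infinity"
    by (rule filterlim_norm_at_top)
  then show "((\<lambda>x::real^3. c / norm x) \<longlongrightarrow> 0) at_infinity"
    by (intro tendsto_divide_0[OF tendsto_const] filterlim_at_top_imp_at_infinity)
qed

definition truncated_potential :: "(real^3 \<Rightarrow> real) \<Rightarrow> real \<Rightarrow> real^3 \<Rightarrow> real" where
  "truncated_potential u \<delta> x = (\<integral>y. jbr y powr (-\<gamma>) * u y / max (norm (x - y)) \<delta> \<partial>lborel)"

definition singular_kernel :: "real \<Rightarrow> real^3 \<Rightarrow> real" where
  "singular_kernel \<delta> z = (if norm z < \<delta> then norm z powr -q0 else 0)"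

lemma singular_kernel_measurable[measurable]: "singular_kernel \<delta> \<in> borel_measurable borel"
  unfolding singular_kernel_def by measurable

lemma singular_kernel_nonneg: "0 \<le> singular_kernel \<delta> z"
  unfolding singular_kernel_def by simp

lemma singular_kernel_le_kernel_majorant:
  assumes "\<delta> \<le> 1"
  shows "singular_kernel \<delta> z \<le> kernel_majorant z"
proof (cases "norm z < \<delta> \<and> z \<noteq> 0")
  case True
  then have "norm z powr -q_inf \<ge> norm z powr -q0"
    using assms exponent_bounds by (intro powr_mono') auto
  then show ?thesis using True unfolding singular_kernel_def kernel_majorant_def by simp
qed (auto simp: singular_kernel_def kernel_majorant_nonneg kernel_majorant_def)

lemma integrable_singular_kernel: "\<delta> \<le> 1 \<Longrightarrow> integrable lborel (singular_kernel \<delta>)"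
  using singular_kernel_le_kernel_majorant[of \<delta>] singular_kernel_nonneg[of \<delta>] kernel_majorant_nonneg
  by (intro Bochner_Integration.integrable_bound[OF integrable_kernel_majorant] AE_I2) auto

lemma integral_singular_kernel_tendsto_0:
  "(\<lambda>n. integral\<^sup>L lborel (singular_kernel (1 / Suc n))) \<longlonglongrightarrow> 0"
proof -
  have "(\<lambda>n. integral\<^sup>L lborel (singular_kernel (1 / Suc n))) \<longlonglongrightarrow> (\<integral>z. 0 \<partial>(lborel :: (real^3) measure))"
  proof (rule Bochner_Integration.integral_dominated_convergence[OF _ _ integrable_kernel_majorant])
    show "AE z in lborel. (\<lambda>n. singular_kernel (1 / Suc n) z) \<longlonglongrightarrow> 0"
    proof (rule AE_I2)
      fix z :: "real^3"
      show "(\<lambda>n. singular_kernel (1 / Suc n) z) \<longlonglongrightarrow> 0"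
      proof (cases "z = 0")
        case False
        have "(\<lambda>n. 1 / real (Suc n)) \<longlonglongrightarrow> 0" by (rule LIMSEQ_Suc[OF lim_const_over_n])
        then have "eventually (\<lambda>n. 1 / real (Suc n) < norm z) sequentially"
          using False by (intro order_tendstoD(2)) auto
        then show ?thesis
          by (rule tendsto_eventually[OF eventually_mono]) (simp add: singular_kernel_def)
      qed (simp add: singular_kernel_def)
    qed
    show "AE z in lborel. norm (singular_kernel (1 / Suc n) z) \<le> kernel_majorant z" for n
      using singular_kernel_le_kernel_majorant[of "1 / Suc n"]
      by (intro AE_I2) (simp add: singular_kernel_def)
  qed simp_all
  then show ?thesis by simp
qed

lemma continuous_truncated_potential:
  assumes u: "in_Lp \<sigma> u" "in_Lp \<rho> u" and \<delta>: "0 < \<delta>"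
  shows "continuous_on UNIV (truncated_potential u \<delta>)"
proof (rule continuous_on_sequentiallyI)
  have [measurable]: "u \<in> borel_measurable borel" using u unfolding in_Lp_def by simp
  define f where "f y = jbr y powr (-\<gamma>) * u y" for y
  fix X :: "nat \<Rightarrow> real^3" and a assume X: "X \<longlonglongrightarrow> a"
  have "(\<lambda>j. \<integral>y. f y / max (norm (X j - y)) \<delta> \<partial>lborel) \<longlonglongrightarrow> (\<integral>y. f y / max (norm (a - y)) \<delta> \<partial>lborel)"
  proof (rule Bochner_Integration.integral_dominated_convergence[where w = "\<lambda>y. \<bar>f y\<bar> / \<delta>"])
    show "integrable lborel (\<lambda>y. \<bar>f y\<bar> / \<delta>)"
      using integrable_weighted[OF u] unfolding f_def by simp
    show "AE y in lborel. (\<lambda>j. f y / max (norm (X j - y)) \<delta>) \<longlonglongrightarrow> f y / max (norm (a - y)) \<delta>"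
      using \<delta> by (intro AE_I2 tendsto_intros X) auto
    show "AE y in lborel. norm (f y / max (norm (X j - y)) \<delta>) \<le> \<bar>f y\<bar> / \<delta>" for j
      using \<delta> by (intro AE_I2) (simp add: abs_mult frac_le)
  qed (auto simp: f_def)
  then show "(\<lambda>j. truncated_potential u \<delta> (X j)) \<longlonglongrightarrow> truncated_potential u \<delta> a"
    unfolding truncated_potential_def f_def .
qed

lemma truncation_error_le:
  fixes f a :: real and z :: "real^3"
  assumes "\<bar>f\<bar> \<le> a" "0 < l" "0 < s" "0 < \<delta>" "z \<noteq> 0"
  shows "\<bar>f / norm z - f / max (norm z) \<delta>\<bar>
    \<le> l * (s powr \<rho> * (a / l) powr \<rho> + singular_kernel \<delta> z / s powr q0)"
proof -
  define b where "b = (if norm z < \<delta> then 1 / norm z else 0)"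
  have "\<bar>1 / norm z - 1 / max (norm z) \<delta>\<bar> \<le> b"
    using assms by (auto simp: b_def max_def frac_le)
  moreover have "\<bar>f / norm z - f / max (norm z) \<delta>\<bar> = \<bar>f\<bar> * \<bar>1 / norm z - 1 / max (norm z) \<delta>\<bar>"
    by (simp add: abs_mult[symmetric] algebra_simps)
  ultimately have "\<bar>f / norm z - f / max (norm z) \<delta>\<bar> \<le> a * b"
    using assms by (simp add: mult_mono b_def)
  also have "\<dots> = l * ((a / l) * b)" using assms by simp
  also have "\<dots> \<le> l * (s powr \<rho> * (a / l) powr \<rho> + b powr q0 / s powr q0)"
    using assms exponent_bounds rho_gt
    by (intro mult_left_mono Youngs_inequality_scaled) (auto simp: b_def)
  also have "b powr q0 = singular_kernel \<delta> z"
    by (simp add: b_def singular_kernel_def inverse_powr powr_minus divide_inverse)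
  finally show ?thesis .
qed

lemma Qop_minus_truncated_le:
  assumes u: "in_Lp \<sigma> u" "in_Lp \<rho> u" and l: "0 < l" "Lp_norm \<sigma> u \<le> l" "Lp_norm \<rho> u \<le> l"
    and s: "0 < s" and \<delta>: "0 < \<delta>" "\<delta> \<le> 1"
  shows "\<bar>Qop \<gamma> u x - truncated_potential u \<delta> x\<bar>
    \<le> l * (s powr \<rho> + integral\<^sup>L lborel (singular_kernel \<delta>) / s powr q0)"
proof -
  have [measurable]: "u \<in> borel_measurable borel" using u unfolding in_Lp_def by simp
  have \<rho>: "0 < \<rho>" using rho_gt by simp
  define f where "f y = jbr y powr (-\<gamma>) * u y" for y
  define D where "D y = f y / norm (x - y) - f y / max (norm (x - y)) \<delta>" for y
  define B where "B y = l * (s powr \<rho> * (\<bar>u y\<bar> / l) powr \<rho> + singular_kernel \<delta> (x - y) / s powr q0)" for y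
  have int_Q: "integrable lborel (\<lambda>y. f y / norm (x - y))"
    unfolding f_def by (rule integrable_Qop_integrand[OF u l])
  have "integrable lborel (\<lambda>y. \<bar>f y\<bar> / \<delta>)"
    using integrable_weighted[OF u] unfolding f_def by simp
  then have int_T: "integrable lborel (\<lambda>y. f y / max (norm (x - y)) \<delta>)"
    by (rule Bochner_Integration.integrable_bound) (use \<delta> in \<open>auto simp: f_def abs_mult frac_le\<close>)
  have int_B: "integrable lborel B"
    unfolding B_def using integrable_Lp_normalized[OF u(2) \<rho> l(1,3)]
      integrable_reflect_lborel[OF integrable_singular_kernel[OF \<delta>(2)]] by simp
  have le_B: "AE y in lborel. \<bar>D y\<bar> \<le> B y"
    using AE_lborel_singleton[of x]
  proof eventually_elim
    case (elim y)
    have "\<bar>f y\<bar> \<le> \<bar>u y\<bar>"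
      unfolding f_def using jbr_powr_pos[of y \<gamma>] jbr_powr_le_1[of \<gamma> y] gamma_gt_1
      by (simp add: abs_mult mult_left_le_one_le)
    then show ?case
      unfolding D_def B_def using l s \<delta> elim by (intro truncation_error_le) auto
  qed
  have "\<bar>Qop \<gamma> u x - truncated_potential u \<delta> x\<bar> = \<bar>integral\<^sup>L lborel D\<bar>"
    unfolding Qop_def truncated_potential_def D_def f_def
    using int_Q int_T by (simp add: f_def Bochner_Integration.integral_diff)
  also have "\<dots> \<le> (\<integral>y. \<bar>D y\<bar> \<partial>lborel)"
    by (rule integral_abs_bound)
  also have "\<dots> \<le> integral\<^sup>L lborel B"
    using int_Q int_T by (intro integral_mono_AE[OF _ int_B le_B]) (simp add: D_def)
  also have "\<dots> = l * (s powr \<rho> * (\<integral>y. (\<bar>u y\<bar> / l) powr \<rho> \<partial>lborel) + integral\<^sup>L lborel (singular_kernel \<delta>) / s powr q0)"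
    unfolding B_def using integrable_Lp_normalized[OF u(2) \<rho> l(1,3)]
      integrable_reflect_lborel[OF integrable_singular_kernel[OF \<delta>(2)]]
    by (simp add: integral_reflect_lborel[OF integrable_singular_kernel[OF \<delta>(2)]])
  also have "\<dots> \<le> l * (s powr \<rho> * 1 + integral\<^sup>L lborel (singular_kernel \<delta>) / s powr q0)"
    using integral_Lp_normalized_le_1[OF u(2) \<rho> l(1,3)] l
    by (intro mult_left_mono add_mono) auto
  finally show ?thesis by simp
qed

lemma uniform_limit_truncated_potential:
  assumes u: "in_Lp \<sigma> u" "in_Lp \<rho> u"
  shows "uniform_limit UNIV (\<lambda>n. truncated_potential u (1 / Suc n)) (Qop \<gamma> u) sequentially"
proof (rule uniform_limitI)
  fix e :: real assume e: "0 < e"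
  define l where "l = Lp_norm \<sigma> u + Lp_norm \<rho> u + 1"
  have l: "0 < l" "Lp_norm \<sigma> u \<le> l" "Lp_norm \<rho> u \<le> l"
    unfolding l_def using Lp_norm_nonneg[of \<sigma> u] Lp_norm_nonneg[of \<rho> u] by auto
  define s where "s = (e / (4 * l)) powr (1 / \<rho>)"
  have s: "0 < s" "s powr \<rho> = e / (4 * l)"
    unfolding s_def using e l rho_gt by (auto simp: powr_powr)
  have "eventually (\<lambda>n. integral\<^sup>L lborel (singular_kernel (1 / Suc n)) < e / (4 * l) * s powr q0) sequentially"
    using e l s by (intro order_tendstoD(2)[OF integral_singular_kernel_tendsto_0]) auto
  then show "\<forall>\<^sub>F n in sequentially. \<forall>x\<in>UNIV. dist (truncated_potential u (1 / Suc n) x) (Qop \<gamma> u x) < e"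
  proof (rule eventually_mono, intro ballI)
    fix n x
    assume small: "integral\<^sup>L lborel (singular_kernel (1 / Suc n)) < e / (4 * l) * s powr q0"
    have "dist (truncated_potential u (1 / Suc n) x) (Qop \<gamma> u x)
        \<le> l * (s powr \<rho> + integral\<^sup>L lborel (singular_kernel (1 / Suc n)) / s powr q0)"
      unfolding dist_real_def
      using Qop_minus_truncated_le[OF u l s(1), of "1 / Suc n" x] by (simp add: abs_minus_commute)
    also have "\<dots> < l * (e / (4 * l) + e / (4 * l))"
    proof (rule mult_strict_left_mono)
      have "integral\<^sup>L lborel (singular_kernel (1 / Suc n)) / s powr q0 < e / (4 * l)"
        using small s by (simp add: pos_divide_less_eq)
      then show "s powr \<rho> + integral\<^sup>L lborel (singular_kernel (1 / Suc n)) / s powr q0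
          < e / (4 * l) + e / (4 * l)" using s(2) by linarith
    qed (use l in simp)
    also have "\<dots> < e" using e l by (simp add: field_simps)
    finally show "dist (truncated_potential u (1 / Suc n) x) (Qop \<gamma> u x) < e" .
  qed
qed

lemma continuous_Qop:
  assumes u: "in_Lp \<sigma> u" "in_Lp \<rho> u"
  shows "continuous_on UNIV (Qop \<gamma> u)"
  using continuous_truncated_potential[OF u] uniform_limit_truncated_potential[OF u]
  by (intro uniform_limit_theorem[where F = sequentially]) auto

end

theorem lemma4p7:
  fixes \<gamma> \<sigma> \<rho> :: real
  assumes "1 < \<gamma>" "\<gamma> \<le> 2" "1 \<le> \<sigma>" "\<sigma> < 3/2" "3/2 < \<rho>"
  shows "(\<exists>C. \<forall>u. in_Lp \<sigma> u \<and> in_Lp \<rho> u \<longrightarrow>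
            (\<forall>x. integrable lborel (\<lambda>y. jbr y powr (-\<gamma>) * u y / norm (x - y))) \<and>
            continuous_on UNIV (Qop \<gamma> u) \<and>
            bounded (range (Qop \<gamma> u)) \<and>
            (Qop \<gamma> u \<longlongrightarrow> 0) at_infinity \<and>
            (\<forall>x. \<bar>Qop \<gamma> u x\<bar> \<le> C * (Lp_norm \<sigma> u + Lp_norm \<rho> u)))
       \<and> (\<forall>R\<ge>1. \<exists>C. \<forall>u. in_Lp \<sigma> u \<and> in_Lp \<rho> u \<longrightarrow>
            (\<forall>x. norm x \<ge> R \<longrightarrow>
               \<bar>Qop \<gamma> u x - Cu \<gamma> u / norm x\<bar>
                 \<le> C * (Lp_norm \<sigma> u + Lp_norm \<rho> u) / jbr x powr \<gamma>))"
proof -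
  interpret potential_exponents \<sigma> \<rho> \<gamma> using assms by unfold_locales
  define C_sup C_asym where "C_sup = 2 + K" and "C_asym = 16 * (2 + K)"
  have integrable: "integrable lborel (\<lambda>y. jbr y powr (-\<gamma>) * u y / norm (x - y))"
    if u: "in_Lp \<sigma> u" "in_Lp \<rho> u" for u x
    using Lp_norm_nonneg[of \<sigma> u] Lp_norm_nonneg[of \<rho> u]
    by (intro integrable_Qop_integrand[OF u, of "Lp_norm \<sigma> u + Lp_norm \<rho> u + 1"]) auto
  show ?thesis (is "?bounded \<and> ?asymptotic")
  proof
    show ?bounded
      by (intro exI[of _ C_sup] allI impI conjI)
         (use integrable continuous_Qop bounded_range_Qop Qop_tendsto_0
           abs_Qop_le_Lp_norms[folded C_sup_def] in auto)
    show ?asymptotic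
      by (intro allI impI exI[of _ C_asym]) (use Qop_asymptotics[folded C_asym_def] in auto)
  qed
qed

end
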